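(* Let $Y$ be a complex Banach space and $U:\mathcal B(\mathcal H)\to Y$ a non-null bounded linear operator with $\|U\|<\lambda$. Then for every $n\in\mathbb N$, $$AP_\lambda(B_{\ell_1^n},1,U)=\frac{R_\lambda(\mathbb D,1,U)}{n}.$$
   Context: $\mathcal B(\mathcal H)$: bounded operators on a complex Hilbert space; $\mathbb D$ the open unit disc; $B_{\ell_1^n}$ the open unit ball of $\ell_1^n$. Bounded pluriharmonic $f:\Omega\to\mathcal B(\mathcal H)$ are written $f(z)=\sum_\alpha a_\alpha z^\alpha+\sum_{|\alpha|\ge1}b_\alpha^*\bar z^\alpha$ ($b_0=0$), $\|f\|_\Omega=\sup\|f(z)\|$. $R_\lambda(\Omega,1,U)$: supremum of $r\ge0$ with $\sup_{z\in r\Omega}\sum_\alpha(\|U(a_\alpha)\|+\|U(b_\alpha)\|)|z^\alpha|\le\lambda\|f\|_\Omega$ for all such $f$. $AP_\lambda(\Omega,1,U)$ ($\Omega\subset\mathbb C^n$): supremum of $\frac1n\sum r_i$ over $r\in\mathbb R^n_{\ge0}$ with $\sum_\alpha(\|U(a_\alpha)\|+\|U(b_\alpha)\|)r^{\alpha}\le\lambda\|f\|_\Omega$ for all such $f$. *)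

theory Defs
  imports "HOL-Analysis.Analysis"
begin

text \<open>The distribution has no complex vector space classes, so we introduce them:
a complex normed space is a real normed space with a compatible complex scalar
multiplication; a complex Hilbert space is a complete one whose norm comes from a
complex inner product (linear in the second argument).\<close>

class cnormed = real_normed_vector +
  fixes scaleC :: "complex \<Rightarrow> 'a \<Rightarrow> 'a" (infixr \<open>*\<^sub>C\<close> 75)
  assumes scaleC_add_right: "a *\<^sub>C (x + y) = a *\<^sub>C x + a *\<^sub>C y"
    and scaleC_add_left: "(a + b) *\<^sub>C x = a *\<^sub>C x + b *\<^sub>C x"
    and scaleC_scaleC: "a *\<^sub>C (b *\<^sub>C x) = (a * b) *\<^sub>C x"
    and scaleC_one: "1 *\<^sub>C x = x"
    and scaleR_scaleC: "scaleR r x = complex_of_real r *\<^sub>C x"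
    and norm_scaleC: "norm (a *\<^sub>C x) = cmod a * norm x"

class chilbert = cnormed + complete_space +
  fixes cinner :: "'a \<Rightarrow> 'a \<Rightarrow> complex"
  assumes cinner_conj_sym: "cinner x y = cnj (cinner y x)"
    and cinner_add_right: "cinner x (y + z) = cinner x y + cinner x z"
    and cinner_scaleC_right: "cinner x (a *\<^sub>C y) = a * cinner x y"
    and cinner_self_norm: "cinner x x = complex_of_real ((norm x)\<^sup>2)"

instantiation complex :: chilbert
begin
definition scaleC_complex :: "complex \<Rightarrow> complex \<Rightarrow> complex" where "scaleC_complex a x = a * x"
definition cinner_complex :: "complex \<Rightarrow> complex \<Rightarrow> complex" where "cinner_complex x y = cnj x * y"
instance
proof
  fix a b :: complex and x y z :: complex and r :: real
  show "a *\<^sub>C (x + y) = a *\<^sub>C x + a *\<^sub>C y" by (simp add: scaleC_complex_def distrib_left)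
  show "(a + b) *\<^sub>C x = a *\<^sub>C x + b *\<^sub>C x" by (simp add: scaleC_complex_def distrib_right)
  show "a *\<^sub>C (b *\<^sub>C x) = (a * b) *\<^sub>C x" by (simp add: scaleC_complex_def mult.assoc)
  show "1 *\<^sub>C x = x" by (simp add: scaleC_complex_def)
  show "scaleR r x = complex_of_real r *\<^sub>C x" by (simp add: scaleC_complex_def scaleR_conv_of_real)
  show "norm (a *\<^sub>C x) = cmod a * norm x" by (simp add: scaleC_complex_def norm_mult)
  show "cinner x y = cnj (cinner y x)" by (simp add: cinner_complex_def mult.commute)
  show "cinner x (y + z) = cinner x y + cinner x z" by (simp add: cinner_complex_def distrib_left)
  show "cinner x (a *\<^sub>C y) = a * cinner x y" by (simp add: cinner_complex_def scaleC_complex_def mult.left_commute)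
  show "cinner x x = complex_of_real ((norm x)\<^sup>2)" using complex_norm_square[of x] by (simp add: cinner_complex_def mult.commute)
qed
end

text \<open>Elements of B(H): bounded complex-linear maps H \<Rightarrow> H; the norm is the operator norm onorm.\<close>
definition bop :: "('h::cnormed \<Rightarrow> 'h) \<Rightarrow> bool" where
  "bop T \<longleftrightarrow> (\<forall>x y. T (x + y) = T x + T y) \<and> (\<forall>c x. T (c *\<^sub>C x) = c *\<^sub>C T x)
      \<and> (\<exists>K. \<forall>x. norm (T x) \<le> norm x * K)"

definition adj :: "('h::chilbert \<Rightarrow> 'h) \<Rightarrow> 'h \<Rightarrow> 'h" where
  "adj T = (SOME S. \<forall>x y. cinner (T x) y = cinner x (S y))"

definition op_linear :: "(('h::cnormed \<Rightarrow> 'h) \<Rightarrow> 'y::cnormed) \<Rightarrow> bool" where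
  "op_linear U \<longleftrightarrow>
     (\<forall>S T. bop S \<longrightarrow> bop T \<longrightarrow> U (\<lambda>x. S x + T x) = U S + U T) \<and>
     (\<forall>c T. bop T \<longrightarrow> U (\<lambda>x. c *\<^sub>C T x) = c *\<^sub>C U T)"

definition op_bounded :: "(('h::cnormed \<Rightarrow> 'h) \<Rightarrow> 'y::cnormed) \<Rightarrow> bool" where
  "op_bounded U \<longleftrightarrow> (\<exists>K. \<forall>T. bop T \<longrightarrow> norm (U T) \<le> K * onorm T)"

definition op_norm :: "(('h::cnormed \<Rightarrow> 'h) \<Rightarrow> 'y::cnormed) \<Rightarrow> real" where
  "op_norm U = (SUP T\<in>{T. bop T \<and> onorm T \<le> 1}. norm (U T))"

text \<open>Points of C^n are functions nat \<Rightarrow> complex (coordinates 0..n-1);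
multi-indices in N^n are functions nat \<Rightarrow> nat vanishing from n on.\<close>
definition multi_idx :: "nat \<Rightarrow> (nat \<Rightarrow> nat) set" where
  "multi_idx n = {\<alpha>. \<forall>i\<ge>n. \<alpha> i = 0}"

definition mpow :: "nat \<Rightarrow> (nat \<Rightarrow> 'a::comm_ring_1) \<Rightarrow> (nat \<Rightarrow> nat) \<Rightarrow> 'a" where
  "mpow n z \<alpha> = (\<Prod>i<n. z i ^ \<alpha> i)"

definition ball_l1 :: "nat \<Rightarrow> (nat \<Rightarrow> complex) set" where
  "ball_l1 n = {z. (\<forall>i\<ge>n. z i = 0) \<and> (\<Sum>i<n. cmod (z i)) < 1}"

definition unit_disc :: "(nat \<Rightarrow> complex) set" where
  "unit_disc = {z. (\<forall>i\<ge>1. z i = 0) \<and> cmod (z 0) < 1}"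

definition scale_set :: "real \<Rightarrow> (nat \<Rightarrow> complex) set \<Rightarrow> (nat \<Rightarrow> complex) set" where
  "scale_set r \<Omega> = (\<lambda>z i. complex_of_real r * z i) ` \<Omega>"

definition ph_eval :: "nat \<Rightarrow> ((nat \<Rightarrow> nat) \<Rightarrow> 'h::chilbert \<Rightarrow> 'h) \<Rightarrow> ((nat \<Rightarrow> nat) \<Rightarrow> 'h \<Rightarrow> 'h)
    \<Rightarrow> (nat \<Rightarrow> complex) \<Rightarrow> 'h \<Rightarrow> 'h" where
  "ph_eval n a b z = (\<lambda>x. \<Sum>\<^sub>\<infinity>\<alpha>\<in>multi_idx n.
      mpow n z \<alpha> *\<^sub>C a \<alpha> x + cnj (mpow n z \<alpha>) *\<^sub>C adj (b \<alpha>) x)"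

text \<open>(a, b) are the coefficients of a bounded pluriharmonic f : \<Omega> \<rightarrow> B(H) on the
complete Reinhardt domain \<Omega>: coefficients in B(H), b_0 = 0, the expansion converging
(absolutely, in operator norm) at every point of \<Omega>, and f bounded on \<Omega>.\<close>
definition ph_series :: "nat \<Rightarrow> (nat \<Rightarrow> complex) set \<Rightarrow> ((nat \<Rightarrow> nat) \<Rightarrow> 'h::chilbert \<Rightarrow> 'h)
    \<Rightarrow> ((nat \<Rightarrow> nat) \<Rightarrow> 'h \<Rightarrow> 'h) \<Rightarrow> bool" where
  "ph_series n \<Omega> a b \<longleftrightarrow>
     (\<forall>\<alpha>\<in>multi_idx n. bop (a \<alpha>) \<and> bop (b \<alpha>)) \<and> b (\<lambda>_. 0) = (\<lambda>x. 0) \<and>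
     (\<forall>z\<in>\<Omega>. (\<lambda>\<alpha>. (onorm (a \<alpha>) + onorm (b \<alpha>)) * norm (mpow n z \<alpha>)) summable_on multi_idx n) \<and>
     bdd_above ((\<lambda>z. onorm (ph_eval n a b z :: 'h \<Rightarrow> 'h)) ` \<Omega>)"

definition ph_norm :: "nat \<Rightarrow> (nat \<Rightarrow> complex) set \<Rightarrow> ((nat \<Rightarrow> nat) \<Rightarrow> 'h::chilbert \<Rightarrow> 'h)
    \<Rightarrow> ((nat \<Rightarrow> nat) \<Rightarrow> 'h \<Rightarrow> 'h) \<Rightarrow> real" where
  "ph_norm n \<Omega> a b = (SUP z\<in>\<Omega>. onorm (ph_eval n a b z :: 'h \<Rightarrow> 'h))"

text \<open>A series of nonnegative terms has sum \<le> C (sum understood in [0,\<infinity>]).\<close>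
definition nn_sum_le :: "('a \<Rightarrow> real) \<Rightarrow> 'a set \<Rightarrow> real \<Rightarrow> bool" where
  "nn_sum_le g A C \<longleftrightarrow> g summable_on A \<and> (\<Sum>\<^sub>\<infinity>\<alpha>\<in>A. g \<alpha>) \<le> C"

text \<open>R_\<lambda>(\<Omega>,1,U), \<Omega> \<subseteq> C^n.  The supremum over z \<in> r\<Omega> of the majorant series is \<le> \<lambda>||f||
iff each of these series is.\<close>
definition R_lambda :: "real \<Rightarrow> nat \<Rightarrow> (nat \<Rightarrow> complex) set \<Rightarrow> (('h::chilbert \<Rightarrow> 'h) \<Rightarrow> 'y::cnormed) \<Rightarrow> real" where
  "R_lambda lam n \<Omega> U = Sup {r. r \<ge> 0 \<and>
     (\<forall>a b. ph_series n \<Omega> a b \<longrightarrow>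
        (\<forall>z\<in>scale_set r \<Omega>.
           nn_sum_le (\<lambda>\<alpha>. (norm (U (a \<alpha>)) + norm (U (b \<alpha>))) * norm (mpow n z \<alpha>))
             (multi_idx n) (lam * ph_norm n \<Omega> a b)))}"

definition AP_lambda :: "real \<Rightarrow> nat \<Rightarrow> (nat \<Rightarrow> complex) set \<Rightarrow> (('h::chilbert \<Rightarrow> 'h) \<Rightarrow> 'y::cnormed) \<Rightarrow> real" where
  "AP_lambda lam n \<Omega> U = Sup {(\<Sum>i<n. r i) / real n | r. (\<forall>i<n. r i \<ge> 0) \<and>
     (\<forall>a b. ph_series n \<Omega> a b \<longrightarrow>
        nn_sum_le (\<lambda>\<alpha>. (norm (U (a \<alpha>)) + norm (U (b \<alpha>))) * mpow n r \<alpha>)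
          (multi_idx n) (lam * ph_norm n \<Omega> a b))}"

end

(* If r is admissible for the ball, pull a pluriharmonic f on the disc back to
   w |-> f (w_1 + ... + w_n) on the ball.  By the multinomial theorem its coefficients are
   multinomial multiples of those of f, so regrouping the majorant series at r by total degree
   gives exactly the majorant series of f at radius r_1 + ... + r_n, which is therefore
   admissible for the disc.  Conversely, if s is admissible for the disc, restricting series on
   the ball to the first coordinate axis shows that (t, 0, ..., 0) is admissible for the ball
   for every t < s.  Hence the averages (r_1 + ... + r_n) / n have supremum R / n.
   Regrouping the conjugate-analytic part needs the adjoint to be bounded, which is where the
   Riesz representation theorem enters. *)

theory Submission
  imports Defs
begin

instance chilbert \<subseteq> banach ..

section \<open>Complex Hilbert spaces\<close>

lemma scaleC_zero_left [simp]: "(0::complex) *\<^sub>C (x::'a::cnormed) = 0"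
  using norm_scaleC[of 0 x] by simp

lemma scaleC_zero_right [simp]: "a *\<^sub>C (0::'a::cnormed) = 0"
  using norm_scaleC[of a "0::'a"] by simp

lemma scaleC_minus_left: "(- a) *\<^sub>C (x::'a::cnormed) = - (a *\<^sub>C x)"
  using scaleC_add_left[of a "-a" x] by (simp add: minus_unique)

lemma scaleC_sum_left: "(\<Sum>i\<in>I. f i) *\<^sub>C (x::'a::cnormed) = (\<Sum>i\<in>I. f i *\<^sub>C x)"
  by (induction I rule: infinite_finite_induct) (auto simp: scaleC_add_left)

lemma cinner_zero_right [simp]: "cinner (x::'a::chilbert) 0 = 0"
  using cinner_add_right[of x 0 0] by simp

lemma cinner_zero_left [simp]: "cinner 0 (x::'a::chilbert) = 0"
  using cinner_conj_sym[of 0 x] by simp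

lemma cinner_add_left: "cinner (x + y) (z::'a::chilbert) = cinner x z + cinner y z"
  by (metis cinner_add_right cinner_conj_sym complex_cnj_add)

lemma cinner_scaleC_left: "cinner (a *\<^sub>C x) (y::'a::chilbert) = cnj a * cinner x y"
  by (metis cinner_conj_sym cinner_scaleC_right complex_cnj_mult)

lemma cinner_minus_right: "cinner x (- y::'a::chilbert) = - cinner x y"
  using cinner_add_right[of x y "-y"] by (simp add: minus_unique)

lemma cinner_diff_right: "cinner x (y - z::'a::chilbert) = cinner x y - cinner x z"
  using cinner_add_right[of x y "-z"] by (simp add: cinner_minus_right)

lemma cinner_self_eq_0 [simp]: "cinner x x = 0 \<longleftrightarrow> (x::'a::chilbert) = 0"
  by (simp add: cinner_self_norm)

lemma power2_norm_eq_cinner: "(norm (x::'a::chilbert))\<^sup>2 = Re (cinner x x)"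
  by (simp add: cinner_self_norm)

lemma power2_norm_add:
  "(norm (x + y::'a::chilbert))\<^sup>2 = (norm x)\<^sup>2 + (norm y)\<^sup>2 + 2 * Re (cinner x y)"
proof -
  have "cinner (x + y) (x + y) = cinner x x + cinner y y + (cinner x y + cnj (cinner x y))"
    by (simp add: cinner_add_left cinner_add_right cinner_conj_sym[of y x])
  then show ?thesis
    by (simp add: power2_norm_eq_cinner)
qed

lemma parallelogram_law:
  "(norm (x - y::'a::chilbert))\<^sup>2 = 2 * (norm x)\<^sup>2 + 2 * (norm y)\<^sup>2 - (norm (x + y))\<^sup>2"
  using power2_norm_add[of x "- y"] power2_norm_add[of x y] by (simp add: cinner_minus_right)

lemma power2_norm_sub_projection:
  fixes x y :: "'a::chilbert"
  assumes "x \<noteq> 0"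
  shows "(norm (y - (cinner x y / complex_of_real ((norm x)\<^sup>2)) *\<^sub>C x))\<^sup>2
    = (norm y)\<^sup>2 - (cmod (cinner x y))\<^sup>2 / (norm x)\<^sup>2"
proof -
  define c where "c = cinner x y"
  define N where "N = (norm x)\<^sup>2"
  define t where "t = c / complex_of_real N"
  have N: "N > 0"
    using assms by (simp add: N_def)
  have "(norm (y + - (t *\<^sub>C x)))\<^sup>2 = (norm y)\<^sup>2 + (cmod t)\<^sup>2 * N - 2 * Re (t * cnj c)"
    using power2_norm_add[of y "- (t *\<^sub>C x)"]
    by (simp add: cinner_minus_right cinner_scaleC_right norm_scaleC power_mult_distrib
        N_def c_def cinner_conj_sym[of y x])
  also have "t * cnj c = complex_of_real ((cmod c)\<^sup>2 / N)"
    using complex_norm_square[of c] by (simp add: t_def)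
  also have "cmod t = cmod c / N"
    using N by (simp add: t_def norm_divide)
  finally have "(norm (y - t *\<^sub>C x))\<^sup>2 = (norm y)\<^sup>2 - (cmod c)\<^sup>2 / N"
    using N by (simp add: power2_eq_square)
  then show ?thesis
    by (simp only: t_def c_def N_def)
qed

lemma cinner_cauchy_schwarz: "cmod (cinner x y) \<le> norm (x::'a::chilbert) * norm y"
proof (cases "x = 0")
  case False
  then have "(cmod (cinner x y))\<^sup>2 / (norm x)\<^sup>2 \<le> (norm y)\<^sup>2"
    using power2_norm_sub_projection[of x y] by (metis diff_ge_0_iff_ge zero_le_power2)
  then have "(cmod (cinner x y))\<^sup>2 \<le> (norm y)\<^sup>2 * (norm x)\<^sup>2"
    using False by (subst (asm) pos_divide_le_eq) auto
  also have "\<dots> = (norm x * norm y)\<^sup>2"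
    by (simp add: power_mult_distrib)
  finally have "(cmod (cinner x y))\<^sup>2 \<le> (norm x * norm y)\<^sup>2" .
  then show ?thesis
    by (rule power2_le_imp_le) simp
qed simp

lemma minimising_sequence_Cauchy:
  fixes xs :: "nat \<Rightarrow> 'a::chilbert"
  assumes midpoint: "\<And>j k. d \<le> (norm ((1/2::real) *\<^sub>R (xs j + xs k)))\<^sup>2"
    and small: "\<And>k. (norm (xs k))\<^sup>2 < d + inverse (real (Suc k))"
  shows "Cauchy xs"
proof (rule metric_CauchyI)
  have dist_xs: "(norm (xs j - xs k))\<^sup>2 \<le> 2 * inverse (real (Suc j)) + 2 * inverse (real (Suc k))"
    for j k
  proof -
    have "4 * d \<le> (norm (xs j + xs k))\<^sup>2"
      using midpoint[of j k] by (simp add: power_mult_distrib power2_eq_square)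
    then show ?thesis
      using parallelogram_law[of "xs j" "xs k"] small[of j] small[of k] by linarith
  qed
  fix e :: real
  assume "0 < e"
  then obtain N where N: "inverse (real (Suc N)) < e\<^sup>2 / 4"
    by (metis reals_Archimedean zero_less_divide_iff zero_less_numeral zero_less_power)
  have "dist (xs j) (xs k) < e" if "N \<le> j" "N \<le> k" for j k
  proof -
    have "inverse (real (Suc j)) \<le> inverse (real (Suc N))"
      "inverse (real (Suc k)) \<le> inverse (real (Suc N))"
      using that by (auto intro!: le_imp_inverse_le)
    then have "(norm (xs j - xs k))\<^sup>2 < e\<^sup>2"
      using dist_xs[of j k] N by linarith
    then show ?thesis
      using \<open>0 < e\<close> by (simp add: dist_norm power_less_imp_less_base)
  qed
  then show "\<exists>N. \<forall>j\<ge>N. \<forall>k\<ge>N. dist (xs j) (xs k) < e"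
    by blast
qed

lemma min_norm_point_exists:
  fixes M :: "'a::chilbert set"
  assumes "closed M" "M \<noteq> {}"
    and midpoint: "\<And>x y. x \<in> M \<Longrightarrow> y \<in> M \<Longrightarrow> (1/2::real) *\<^sub>R (x + y) \<in> M"
  shows "\<exists>u\<in>M. \<forall>x\<in>M. norm u \<le> norm x"
proof -
  define d where "d = Inf ((\<lambda>x. (norm x)\<^sup>2) ` M)"
  have d_le: "d \<le> (norm x)\<^sup>2" if "x \<in> M" for x
    unfolding d_def using that by (intro cInf_lower bdd_belowI[of _ 0]) auto
  have "\<exists>x\<in>M. (norm x)\<^sup>2 < d + inverse (real (Suc k))" for k
  proof -
    have "Inf ((\<lambda>x. (norm x)\<^sup>2) ` M) < d + inverse (real (Suc k))"
      by (simp add: d_def)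
    then show ?thesis
      using cInf_lessD[of "(\<lambda>x. (norm x)\<^sup>2) ` M"] assms(2) by blast
  qed
  then obtain xs where xs_in: "\<And>k. xs k \<in> M"
    and xs_small: "\<And>k. (norm (xs k))\<^sup>2 < d + inverse (real (Suc k))"
    by metis
  have "Cauchy xs"
    using xs_small by (intro minimising_sequence_Cauchy[of d] d_le midpoint xs_in)
  then obtain u where lim: "xs \<longlonglongrightarrow> u"
    using Cauchy_convergent_iff convergent_def by blast
  have "u \<in> M"
    using closed_sequentially[OF assms(1)] xs_in lim by blast
  moreover have "(norm u)\<^sup>2 \<le> d"
  proof (rule LIMSEQ_le)
    show "(\<lambda>k. (norm (xs k))\<^sup>2) \<longlonglongrightarrow> (norm u)\<^sup>2"
      using lim by (intro tendsto_intros)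
    show "(\<lambda>k. d + inverse (real (Suc k))) \<longlonglongrightarrow> d"
      using tendsto_add[OF tendsto_const LIMSEQ_inverse_real_of_nat, of d] by simp
  qed (use xs_small in \<open>auto intro: less_imp_le\<close>)
  ultimately show ?thesis
    using d_le by (smt (verit) norm_ge_zero power2_le_imp_le)
qed

lemma min_norm_point_orthogonal:
  fixes u v :: "'a::chilbert"
  assumes "\<And>x. x \<in> M \<Longrightarrow> norm u \<le> norm x" and "\<And>c. u + c *\<^sub>C v \<in> M"
  shows "cinner u v = 0"
proof (cases "v = 0")
  case False
  define t where "t = cinner v u / complex_of_real ((norm v)\<^sup>2)"
  have "u - t *\<^sub>C v \<in> M"
    using assms(2)[of "- t"] by (simp add: scaleC_minus_left)
  then have "(norm u)\<^sup>2 \<le> (norm (u - t *\<^sub>C v))\<^sup>2"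
    using assms(1) by (simp add: power_mono)
  then have "(norm u)\<^sup>2 \<le> (norm u)\<^sup>2 - (cmod (cinner v u))\<^sup>2 / (norm v)\<^sup>2"
    by (simp only: t_def power2_norm_sub_projection[OF False])
  then have "cinner v u = 0"
    using False by (simp add: divide_le_0_iff)
  then show ?thesis
    by (metis cinner_conj_sym complex_cnj_zero)
qed simp

lemma min_norm_level_point_represents:
  fixes \<phi> :: "'a::chilbert \<Rightarrow> complex"
  assumes add: "\<And>x y. \<phi> (x + y) = \<phi> x + \<phi> y"
    and scaleC: "\<And>c x. \<phi> (c *\<^sub>C x) = c * \<phi> x"
    and u: "\<phi> u = 1" and u_min: "\<And>x. \<phi> x = 1 \<Longrightarrow> norm u \<le> norm x"
  shows "cinner u x = \<phi> x * complex_of_real ((norm u)\<^sup>2)"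
proof -
  have ker: "\<phi> (x - \<phi> x *\<^sub>C u) = 0"
    using add[of "x - \<phi> x *\<^sub>C u" "\<phi> x *\<^sub>C u"] by (simp add: scaleC u)
  have on_line: "u + c *\<^sub>C (x - \<phi> x *\<^sub>C u) \<in> {x. \<phi> x = 1}" for c
    using add[of u "c *\<^sub>C (x - \<phi> x *\<^sub>C u)"] scaleC[of c "x - \<phi> x *\<^sub>C u"] by (simp add: ker u)
  have "cinner u (x - \<phi> x *\<^sub>C u) = 0"
    using u_min by (intro min_norm_point_orthogonal[OF _ on_line]) simp
  then show ?thesis
    by (simp add: cinner_diff_right cinner_scaleC_right cinner_self_norm)
qed

lemma riesz_representation:
  fixes \<phi> :: "'a::chilbert \<Rightarrow> complex"
  assumes add: "\<And>x y. \<phi> (x + y) = \<phi> x + \<phi> y"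
    and scaleC: "\<And>c x. \<phi> (c *\<^sub>C x) = c * \<phi> x"
    and bounded: "\<And>x. cmod (\<phi> x) \<le> K * norm x"
  shows "\<exists>y. \<forall>x. \<phi> x = cinner y x"
proof (cases "\<forall>x. \<phi> x = 0")
  case True
  then show ?thesis
    by (intro exI[of _ 0]) simp
next
  case False
  then obtain x0 where "\<phi> x0 \<noteq> 0"
    by blast
  define M where "M = {x. \<phi> x = 1}"
  have scaleR: "\<phi> (r *\<^sub>R x) = r *\<^sub>R \<phi> x" for r x
    by (simp only: scaleR_scaleC[of r x] scaleC) (simp add: scaleR_conv_of_real)
  have "bounded_linear \<phi>"
  proof (rule bounded_linear_intro[of _ K])
    show "cmod (\<phi> x) \<le> norm x * K" for x
      using bounded[of x] by (simp add: mult.commute)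
  qed (simp_all add: add scaleR)
  then have "closed M"
    unfolding M_def by (intro closed_Collect_eq linear_continuous_on continuous_on_const)
  moreover have "M \<noteq> {}"
    using \<open>\<phi> x0 \<noteq> 0\<close> scaleC[of "1 / \<phi> x0" x0] unfolding M_def by auto
  moreover have "(1/2::real) *\<^sub>R (x + y) \<in> M" if "x \<in> M" "y \<in> M" for x y
    using that by (simp add: M_def scaleR add scaleR_conv_of_real)
  ultimately have "\<exists>u\<in>M. \<forall>x\<in>M. norm u \<le> norm x"
    by (rule min_norm_point_exists)
  then obtain u where u: "\<phi> u = 1" and u_min: "\<And>x. \<phi> x = 1 \<Longrightarrow> norm u \<le> norm x"
    by (auto simp: M_def)
  have "u \<noteq> 0"
    using u add[of 0 0] by auto
  then show ?thesis
    using min_norm_level_point_represents[OF add scaleC u u_min]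
    by (intro exI[of _ "complex_of_real (1 / (norm u)\<^sup>2) *\<^sub>C u"]) (simp add: cinner_scaleC_left)
qed

section \<open>Bounded operators and the adjoint\<close>

lemma bopD:
  assumes "bop T"
  shows "T (x + y) = T x + T y" "T (c *\<^sub>C x) = c *\<^sub>C T x"
  using assms unfolding bop_def by auto

lemma bop_bounded_linear:
  assumes "bop (T::'a::cnormed \<Rightarrow> 'a)"
  shows "bounded_linear T"
proof -
  from assms obtain K where "\<And>x. norm (T x) \<le> norm x * K"
    unfolding bop_def by blast
  then show ?thesis
    by (intro bounded_linear_intro[of _ K]) (simp_all add: bopD[OF assms] scaleR_scaleC)
qed

lemma norm_bop_le: "bop T \<Longrightarrow> norm (T x) \<le> onorm T * norm x"
  by (rule onorm[OF bop_bounded_linear])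

lemma onorm_bop_nonneg: "bop T \<Longrightarrow> 0 \<le> onorm T"
  by (rule onorm_pos_le[OF bop_bounded_linear])

lemma bop_zero: "bop (\<lambda>x. 0::'a::cnormed)"
  unfolding bop_def by (auto intro!: exI[of _ 0])

lemma bop_scaleC:
  assumes "bop T"
  shows "bop (\<lambda>x. c *\<^sub>C T x)"
  unfolding bop_def
proof (intro conjI allI exI)
  show "c *\<^sub>C T (x + y) = c *\<^sub>C T x + c *\<^sub>C T y" for x y
    by (simp add: bopD[OF assms] scaleC_add_right)
  show "c *\<^sub>C T (c' *\<^sub>C x) = c' *\<^sub>C c *\<^sub>C T x" for c' x
    by (simp add: bopD[OF assms] scaleC_scaleC mult.commute)
  show "norm (c *\<^sub>C T x) \<le> norm x * (cmod c * onorm T)" for x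
    using mult_left_mono[OF norm_bop_le[OF assms, of x], of "cmod c"]
    by (simp add: norm_scaleC mult_ac)
qed

lemma onorm_scaleC_of_real:
  assumes "bop T"
  shows "onorm (\<lambda>x. complex_of_real r *\<^sub>C T x) = \<bar>r\<bar> * onorm T"
  using onorm_scaleR[OF bop_bounded_linear[OF assms], of r] by (simp add: scaleR_scaleC)

lemma adj_unique:
  fixes T :: "'a::chilbert \<Rightarrow> 'a"
  assumes "\<And>x y. cinner (T x) y = cinner x (S y)"
  shows "adj T = S"
proof
  fix y
  have adj: "\<forall>x y. cinner (T x) y = cinner x (adj T y)"
    unfolding adj_def by (rule someI[of _ S]) (simp add: assms)
  have "cinner x (adj T y - S y) = 0" for x
    using adj assms by (simp add: cinner_diff_right)
  then show "adj T y = S y"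
    using cinner_self_eq_0[of "adj T y - S y"] by simp
qed

lemma cinner_adj:
  fixes T :: "'a::chilbert \<Rightarrow> 'a"
  assumes "bop T"
  shows "cinner (T x) y = cinner x (adj T y)"
proof -
  have "\<exists>z. \<forall>x. cinner y (T x) = cinner z x" for y
  proof (rule riesz_representation[where K = "norm y * onorm T"])
    show "cinner y (T (x + x')) = cinner y (T x) + cinner y (T x')" for x x'
      by (simp add: bopD[OF assms] cinner_add_right)
    show "cinner y (T (c *\<^sub>C x)) = c * cinner y (T x)" for c x
      by (simp add: bopD[OF assms] cinner_scaleC_right)
    show "cmod (cinner y (T x)) \<le> norm y * onorm T * norm x" for x
      using cinner_cauchy_schwarz[of y "T x"]
        mult_left_mono[OF norm_bop_le[OF assms, of x], of "norm y"]
      by (simp add: mult.assoc)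
  qed
  then obtain S where S: "\<And>y x. cinner y (T x) = cinner (S y) x"
    by metis
  have "cinner (T x) y = cinner x (S y)" for x y
    by (metis S cinner_conj_sym)
  moreover from this have "adj T = S"
    by (rule adj_unique)
  ultimately show ?thesis
    by simp
qed

lemma norm_adj_le:
  fixes T :: "'a::chilbert \<Rightarrow> 'a"
  assumes "bop T"
  shows "norm (adj T y) \<le> onorm T * norm y"
proof (cases "adj T y = 0")
  case True
  then show ?thesis
    using onorm_bop_nonneg[OF assms] by simp
next
  case False
  have "(norm (adj T y))\<^sup>2 = Re (cinner (T (adj T y)) y)"
    by (simp add: power2_norm_eq_cinner cinner_adj[OF assms])
  also have "\<dots> \<le> cmod (cinner (T (adj T y)) y)"
    by (rule complex_Re_le_cmod)
  also have "\<dots> \<le> norm (T (adj T y)) * norm y"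
    by (rule cinner_cauchy_schwarz)
  also have "\<dots> \<le> onorm T * norm (adj T y) * norm y"
    using norm_bop_le[OF assms] by (simp add: mult_right_mono)
  finally have "norm (adj T y) * norm (adj T y) \<le> (onorm T * norm y) * norm (adj T y)"
    by (simp add: power2_eq_square mult_ac)
  then show ?thesis
    using False by simp
qed

lemma adj_scaleC:
  fixes T :: "'a::chilbert \<Rightarrow> 'a"
  assumes "bop T"
  shows "adj (\<lambda>x. c *\<^sub>C T x) = (\<lambda>y. cnj c *\<^sub>C adj T y)"
  by (rule adj_unique) (simp add: cinner_scaleC_left cinner_scaleC_right cinner_adj[OF assms])

lemma adj_zero: "adj (\<lambda>x::'a::chilbert. 0) = (\<lambda>y. 0)"
  by (rule adj_unique) simp

lemma op_linear_zero:
  assumes "op_linear U"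
  shows "U (\<lambda>x. 0) = 0"
proof -
  have "U (\<lambda>x. (0::'a) + 0) = U (\<lambda>x. 0) + U (\<lambda>x. 0)"
    using assms bop_zero unfolding op_linear_def by blast
  then show ?thesis
    by simp
qed

lemma op_linear_scaleC: "op_linear U \<Longrightarrow> bop T \<Longrightarrow> U (\<lambda>x. c *\<^sub>C T x) = c *\<^sub>C U T"
  unfolding op_linear_def by auto

lemma op_norm_upper:
  fixes U :: "('a::cnormed \<Rightarrow> 'a) \<Rightarrow> 'y::cnormed"
  assumes "op_bounded U" "bop T" "onorm T \<le> 1"
  shows "norm (U T) \<le> op_norm U"
proof -
  from assms(1) obtain K where K: "\<And>T. bop T \<Longrightarrow> norm (U T) \<le> K * onorm T"
    unfolding op_bounded_def by blast
  have "norm (U S) \<le> max K 0" if "bop S" "onorm S \<le> 1" for S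
  proof -
    have "K * onorm S \<le> max K 0"
      using onorm_bop_nonneg[OF that(1)] that(2)
      by (cases "K \<ge> 0") (auto intro: mult_left_le mult_nonpos_nonneg)
    then show ?thesis
      using K[OF that(1)] by linarith
  qed
  then have "bdd_above ((\<lambda>T. norm (U T)) ` {T. bop T \<and> onorm T \<le> 1})"
    by (intro bdd_aboveI[of _ "max K 0"]) auto
  then show ?thesis
    unfolding op_norm_def using assms(2,3) by (intro cSUP_upper) auto
qed

lemma op_norm_nonneg:
  assumes "op_linear U" "op_bounded U"
  shows "0 \<le> op_norm (U::('a::cnormed \<Rightarrow> 'a) \<Rightarrow> 'y::cnormed)"
  using op_norm_upper[OF assms(2) bop_zero] op_linear_zero[OF assms(1)] by (simp add: onorm_zero)

lemma norm_op_le: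
  fixes U :: "('a::cnormed \<Rightarrow> 'a) \<Rightarrow> 'y::cnormed"
  assumes "op_linear U" "op_bounded U" "bop T"
  shows "norm (U T) \<le> op_norm U * onorm T"
proof (cases "onorm T = 0")
  case True
  then have "T = (\<lambda>x. 0)"
    using onorm_eq_0[OF bop_bounded_linear[OF assms(3)]] by auto
  then show ?thesis
    using op_linear_zero[OF assms(1)] by (simp add: onorm_zero)
next
  case False
  then have pos: "onorm T > 0"
    using onorm_bop_nonneg[OF assms(3)] by simp
  define T' where "T' = (\<lambda>x. complex_of_real (1 / onorm T) *\<^sub>C T x)"
  have "norm (U T') \<le> op_norm U"
    unfolding T'_def using pos onorm_scaleC_of_real[OF assms(3), of "1 / onorm T"]
    by (intro op_norm_upper assms(2) bop_scaleC assms(3)) simp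
  moreover have "norm (U T') = norm (U T) / onorm T"
    unfolding T'_def using op_linear_scaleC[OF assms(1,3)] pos by (simp add: norm_scaleC norm_divide)
  ultimately show ?thesis
    using pos by (simp add: divide_le_eq)
qed

section \<open>Multi-indices and the multinomial theorem\<close>

definition mdeg :: "nat \<Rightarrow> (nat \<Rightarrow> nat) \<Rightarrow> nat" where
  "mdeg n \<alpha> = (\<Sum>i<n. \<alpha> i)"

abbreviation multi_idx_deg :: "nat \<Rightarrow> nat \<Rightarrow> (nat \<Rightarrow> nat) set" where
  "multi_idx_deg n k \<equiv> {\<alpha> \<in> multi_idx n. mdeg n \<alpha> = k}"

text \<open>The coefficient \<open>|\<alpha>|! / (\<alpha>\<^sub>0! \<cdot> \<dots> \<cdot> \<alpha>\<^sub>n\<^sub>-\<^sub>1!)\<close>, built up one variable at a time.\<close>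

fun multinomial_coeff :: "nat \<Rightarrow> (nat \<Rightarrow> nat) \<Rightarrow> nat" where
  "multinomial_coeff 0 \<alpha> = 1"
| "multinomial_coeff (Suc n) \<alpha> = (mdeg (Suc n) \<alpha> choose \<alpha> n) * multinomial_coeff n \<alpha>"

lemma finite_multi_idx_deg: "finite (multi_idx_deg n k)"
proof (rule finite_subset)
  show "multi_idx_deg n k \<subseteq> {\<alpha>. \<forall>i. (i \<in> {..<n} \<longrightarrow> \<alpha> i \<in> {..k}) \<and> (i \<notin> {..<n} \<longrightarrow> \<alpha> i = 0)}"
  proof
    fix \<alpha>
    assume \<alpha>: "\<alpha> \<in> multi_idx_deg n k"
    have "\<alpha> i \<le> k" if "i < n" for i
      using \<alpha> member_le_sum[of i "{..<n}" \<alpha>] that by (auto simp: mdeg_def)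
    then show "\<alpha> \<in> {\<alpha>. \<forall>i. (i \<in> {..<n} \<longrightarrow> \<alpha> i \<in> {..k}) \<and> (i \<notin> {..<n} \<longrightarrow> \<alpha> i = 0)}"
      using \<alpha> by (auto simp: multi_idx_def)
  qed
  show "finite {\<alpha>. \<forall>i. (i \<in> {..<n} \<longrightarrow> \<alpha> i \<in> {..k}) \<and> (i \<notin> {..<n} \<longrightarrow> \<alpha> i = (0::nat))}"
    by (rule finite_set_of_finite_funs) auto
qed

lemma mdeg_Suc: "mdeg (Suc n) \<alpha> = mdeg n \<alpha> + \<alpha> n"
  by (simp add: mdeg_def)

lemma mpow_Suc: "mpow (Suc n) w \<alpha> = mpow n w \<alpha> * w n ^ \<alpha> n"
  by (simp add: mpow_def)

lemma mdeg_upd: "n \<le> m \<Longrightarrow> mdeg n (\<alpha>(m := j)) = mdeg n \<alpha>"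
  unfolding mdeg_def by (intro sum.cong) auto

lemma multinomial_coeff_upd: "n \<le> m \<Longrightarrow> multinomial_coeff n (\<alpha>(m := j)) = multinomial_coeff n \<alpha>"
  by (induction n) (auto simp: mdeg_upd)

lemma mpow_upd: "n \<le> m \<Longrightarrow> mpow n w (\<alpha>(m := j)) = mpow n w \<alpha>"
  unfolding mpow_def by (intro prod.cong) auto

lemma bij_betw_multi_idx_deg_Suc:
  "bij_betw (\<lambda>(j, \<beta>). \<beta>(n := j)) (SIGMA j:{..k}. multi_idx_deg n (k - j)) (multi_idx_deg (Suc n) k)"
proof (rule bij_betw_byWitness[where f' = "\<lambda>\<alpha>. (\<alpha> n, \<alpha>(n := 0))"])
  show "\<forall>p\<in>SIGMA j:{..k}. multi_idx_deg n (k - j).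
      (\<lambda>\<alpha>. (\<alpha> n, \<alpha>(n := 0))) ((\<lambda>(j, \<beta>). \<beta>(n := j)) p) = p"
    by (auto simp: multi_idx_def)
  show "(\<lambda>(j, \<beta>). \<beta>(n := j)) ` (SIGMA j:{..k}. multi_idx_deg n (k - j)) \<subseteq> multi_idx_deg (Suc n) k"
    by (auto simp: multi_idx_def mdeg_Suc mdeg_upd)
  show "(\<lambda>\<alpha>. (\<alpha> n, \<alpha>(n := 0))) ` multi_idx_deg (Suc n) k \<subseteq> (SIGMA j:{..k}. multi_idx_deg n (k - j))"
    by (auto simp: multi_idx_def mdeg_Suc mdeg_upd)
qed auto

theorem multinomial:
  fixes w :: "nat \<Rightarrow> 'a::comm_ring_1"
  shows "(\<Sum>\<alpha>\<in>multi_idx_deg n k. of_nat (multinomial_coeff n \<alpha>) * mpow n w \<alpha>) = (\<Sum>i<n. w i) ^ k"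
proof (induction n arbitrary: k)
  case 0
  have "multi_idx_deg 0 k = (if k = 0 then {\<lambda>_. 0} else {})"
    by (auto simp: multi_idx_def mdeg_def)
  then show ?case
    by (simp add: mpow_def power_0_left)
next
  case (Suc n)
  let ?F = "\<lambda>\<alpha>. of_nat (multinomial_coeff (Suc n) \<alpha>) * mpow (Suc n) w \<alpha> :: 'a"
  have summand: "?F (\<beta>(n := j))
      = of_nat (k choose j) * w n ^ j * (of_nat (multinomial_coeff n \<beta>) * mpow n w \<beta>)"
    if "j \<le> k" "\<beta> \<in> multi_idx_deg n (k - j)" for j \<beta>
  proof -
    have "mdeg (Suc n) (\<beta>(n := j)) = k"
      using that by (simp add: mdeg_Suc mdeg_upd)
    then show ?thesis
      by (simp add: multinomial_coeff_upd mpow_upd mpow_Suc mult_ac)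
  qed
  have "(\<Sum>\<alpha>\<in>multi_idx_deg (Suc n) k. ?F \<alpha>)
      = (\<Sum>(j, \<beta>)\<in>(SIGMA j:{..k}. multi_idx_deg n (k - j)). ?F (\<beta>(n := j)))"
    using sum.reindex_bij_betw[OF bij_betw_multi_idx_deg_Suc, of ?F] by (simp only: case_prod_unfold)
  also have "\<dots> = (\<Sum>j\<le>k. \<Sum>\<beta>\<in>multi_idx_deg n (k - j). ?F (\<beta>(n := j)))"
    by (rule sum.Sigma[symmetric]) (auto simp: finite_multi_idx_deg)
  also have "\<dots> = (\<Sum>j\<le>k. \<Sum>\<beta>\<in>multi_idx_deg n (k - j).
      of_nat (k choose j) * w n ^ j * (of_nat (multinomial_coeff n \<beta>) * mpow n w \<beta>))"
    by (intro sum.cong refl summand) auto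
  also have "\<dots> = (\<Sum>j\<le>k. of_nat (k choose j) * w n ^ j * (\<Sum>i<n. w i) ^ (k - j))"
    by (simp add: sum_distrib_left[symmetric] Suc.IH)
  also have "\<dots> = (\<Sum>i<Suc n. w i) ^ k"
    by (simp add: binomial_ring add.commute)
  finally show ?case .
qed

lemma sum_multi_idx_deg_multinomial:
  fixes w :: "nat \<Rightarrow> 'a::comm_ring_1"
  shows "(\<Sum>\<alpha>\<in>multi_idx_deg n k. h (mdeg n \<alpha>) * (of_nat (multinomial_coeff n \<alpha>) * mpow n w \<alpha>))
    = h k * (\<Sum>i<n. w i) ^ k"
  by (simp add: sum_distrib_left[symmetric] multinomial)

lemma bij_betw_fiberwise: "bij_betw (\<lambda>x. (f x, x)) A (SIGMA k:UNIV. {x \<in> A. f x = k})"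
  by (rule bij_betw_byWitness[where f' = snd]) auto

lemma has_sum_fiberwise:
  fixes g :: "'a \<Rightarrow> 'b::real_normed_vector"
  assumes "(g has_sum S) A" and "\<And>k. finite {x \<in> A. f x = k}"
  shows "((\<lambda>k. \<Sum>x\<in>{x \<in> A. f x = k}. g x) has_sum S) UNIV"
proof -
  have "((\<lambda>(k, x). g x) has_sum S) (SIGMA k:UNIV. {x \<in> A. f x = k})"
    using has_sum_reindex_bij_betw[OF bij_betw_fiberwise[of f A], where f = "\<lambda>(k, x). g x"] assms(1)
    by simp
  then show ?thesis
    by (rule has_sum_Sigma[OF isUCont_plus]) (simp add: assms(2))
qed

lemma summable_on_fiberwise_nonneg:
  fixes g :: "'a \<Rightarrow> real"
  assumes "\<And>x. x \<in> A \<Longrightarrow> 0 \<le> g x"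
    and "(\<lambda>k. \<Sum>x\<in>{x \<in> A. f x = k}. g x) summable_on UNIV"
    and "\<And>k. finite {x \<in> A. f x = k}"
  shows "g summable_on A"
proof -
  have "(\<lambda>(k, x). g x) summable_on (SIGMA k:UNIV. {x \<in> A. f x = k})"
    by (rule summable_on_SigmaI[OF _ assms(2)]) (simp_all add: assms(1,3))
  then show ?thesis
    using summable_on_reindex_bij_betw[OF bij_betw_fiberwise[of f A], where f = "\<lambda>(k, x). g x"] by simp
qed

lemma has_sum_multinomial_degreewise:
  fixes w :: "nat \<Rightarrow> 'a::real_normed_field"
  assumes "((\<lambda>\<alpha>. h (mdeg n \<alpha>) * (of_nat (multinomial_coeff n \<alpha>) * mpow n w \<alpha>)) has_sum S) (multi_idx n)"
  shows "((\<lambda>k. h k * (\<Sum>i<n. w i) ^ k) has_sum S) UNIV"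
  using has_sum_fiberwise[OF assms finite_multi_idx_deg] by (simp only: sum_multi_idx_deg_multinomial)

lemma summable_on_multinomial_degreewise:
  fixes w h :: "nat \<Rightarrow> real"
  assumes "\<And>k. 0 \<le> h k" and "\<And>i. 0 \<le> w i"
    and "(\<lambda>k. h k * (\<Sum>i<n. w i) ^ k) summable_on UNIV"
  shows "(\<lambda>\<alpha>. h (mdeg n \<alpha>) * (real (multinomial_coeff n \<alpha>) * mpow n w \<alpha>)) summable_on multi_idx n"
proof (rule summable_on_fiberwise_nonneg[where f = "mdeg n"])
  show "0 \<le> h (mdeg n \<alpha>) * (real (multinomial_coeff n \<alpha>) * mpow n w \<alpha>)" for \<alpha>
    using assms(1,2) by (simp add: mpow_def prod_nonneg)
qed (use assms(3) in \<open>simp_all only: finite_multi_idx_deg sum_multi_idx_deg_multinomial\<close>)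

text \<open>\<open>axis0 c = (c, 0, 0, \<dots>)\<close> serves both as a point of the disc and, for \<open>c = k\<close>, as the
multi-index of \<open>z\<^sub>0\<^sup>k\<close>; one-variable series are indexed through it.\<close>

definition axis0 :: "'a::zero \<Rightarrow> nat \<Rightarrow> 'a" where
  "axis0 c = (\<lambda>i. if i = 0 then c else 0)"

lemma axis0_in_multi_idx: "1 \<le> n \<Longrightarrow> axis0 k \<in> multi_idx n"
  by (simp add: axis0_def multi_idx_def)

lemma bij_betw_axis0: "bij_betw axis0 UNIV (multi_idx 1)"
proof (rule bij_betw_byWitness[where f' = "\<lambda>\<alpha>. \<alpha> 0"])
  show "\<forall>\<alpha>\<in>multi_idx 1. axis0 (\<alpha> 0) = \<alpha>"
    by (auto simp: axis0_def multi_idx_def fun_eq_iff)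
qed (auto simp: axis0_def multi_idx_def)

lemma multi_idx_1_subset: "1 \<le> n \<Longrightarrow> multi_idx 1 \<subseteq> multi_idx n"
  by (auto simp: multi_idx_def)

lemma multi_idx_nonzero_less: "\<alpha> \<in> multi_idx n \<Longrightarrow> \<alpha> i \<noteq> 0 \<Longrightarrow> i < n"
  unfolding multi_idx_def using not_less by blast

lemma mpow_Suc_0 [simp]: "mpow (Suc 0) z \<alpha> = z 0 ^ \<alpha> 0"
  by (simp add: mpow_def)

lemma mpow_multi_idx_1:
  assumes "1 \<le> n" "\<alpha> \<in> multi_idx 1"
  shows "mpow n z \<alpha> = z 0 ^ \<alpha> 0"
proof -
  have "mpow n z \<alpha> = (\<Prod>i<n. if i = 0 then z 0 ^ \<alpha> 0 else 1)"
    unfolding mpow_def using assms(2) by (intro prod.cong) (auto simp: multi_idx_def)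
  then show ?thesis
    using assms(1) by (simp add: prod.delta)
qed

lemma mpow_eq_0_off_axis:
  assumes "\<And>i. 1 \<le> i \<Longrightarrow> z i = 0" "\<alpha> \<in> multi_idx n" "\<alpha> \<notin> multi_idx 1"
  shows "mpow n z \<alpha> = 0"
proof -
  obtain i where i: "1 \<le> i" "\<alpha> i \<noteq> 0"
    using assms(3) by (auto simp: multi_idx_def)
  have "z i ^ \<alpha> i = 0"
    using i assms(1) by (simp add: power_0_left)
  then show ?thesis
    using multi_idx_nonzero_less[OF assms(2) i(2)] unfolding mpow_def
    by (intro prod_zero bexI[of _ i]) auto
qed

lemma mpow_origin:
  assumes "\<alpha> \<in> multi_idx n"
  shows "mpow n (\<lambda>_. 0::'a::comm_ring_1) \<alpha> = (if \<alpha> = (\<lambda>_. 0) then 1 else 0)"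
proof (cases "\<alpha> = (\<lambda>_. 0)")
  case False
  then obtain i where i: "\<alpha> i \<noteq> 0"
    by auto
  then have "(\<Prod>i<n. (0::'a) ^ \<alpha> i) = 0"
    using multi_idx_nonzero_less[OF assms i] i
    by (intro prod_zero bexI[of _ i]) (auto simp: power_0_left)
  then show ?thesis
    using False by (simp add: mpow_def)
qed (simp add: mpow_def)

lemma norm_mpow: "norm (mpow n z \<alpha>) = mpow n (\<lambda>i. norm (z i)) \<alpha>"
  for z :: "nat \<Rightarrow> 'a::real_normed_field"
  by (simp add: mpow_def prod_norm[symmetric] norm_power)

section \<open>Pluriharmonic series\<close>

lemma nn_sum_le_superset:
  assumes "B \<subseteq> A" "\<And>x. x \<in> A - B \<Longrightarrow> g x = 0" "nn_sum_le g B C"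
  shows "nn_sum_le g A C"
proof -
  have "g summable_on A \<longleftrightarrow> g summable_on B"
    by (rule summable_on_cong_neutral) (use assms(1,2) in auto)
  moreover have "infsum g A = infsum g B"
    by (rule infsum_cong_neutral) (use assms(1,2) in auto)
  ultimately show ?thesis
    using assms(3) by (simp add: nn_sum_le_def)
qed

lemma nn_sum_le_mono:
  fixes g g' :: "'a \<Rightarrow> real"
  assumes "nn_sum_le g' A C" "C \<le> C'" "\<And>x. x \<in> A \<Longrightarrow> 0 \<le> g x \<and> g x \<le> g' x"
  shows "nn_sum_le g A C'"
proof -
  have "g' summable_on A"
    using assms(1) by (simp add: nn_sum_le_def)
  then have "(\<lambda>x. norm (g x)) summable_on A"
    by (rule Infinite_Sum.abs_summable_on_comparison_test') (use assms(3) in auto)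
  then have "g summable_on A"
    by (rule abs_summable_summable)
  moreover from this have "infsum g A \<le> infsum g' A"
    using \<open>g' summable_on A\<close> assms(3) by (intro infsum_mono) auto
  ultimately show ?thesis
    using assms(1,2) by (simp add: nn_sum_le_def)
qed

lemma nn_sum_le_imp_le:
  fixes g :: "'a \<Rightarrow> real"
  assumes "nn_sum_le g A C" "x \<in> A" "\<And>y. y \<in> A \<Longrightarrow> 0 \<le> g y"
  shows "g x \<le> C"
  using finite_sum_le_infsum[of g A "{x}"] assms by (simp add: nn_sum_le_def)

lemma nn_sum_le_multi_idx_1:
  "nn_sum_le g (multi_idx 1) C \<longleftrightarrow> nn_sum_le (\<lambda>k. g (axis0 k)) UNIV C"
  unfolding nn_sum_le_def
  using summable_on_reindex_bij_betw[OF bij_betw_axis0, of g]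
    infsum_reindex_bij_betw[OF bij_betw_axis0, of g]
  by simp

lemma ph_seriesD:
  assumes "ph_series n \<Omega> a b" "\<alpha> \<in> multi_idx n"
  shows "bop (a \<alpha>)" "bop (b \<alpha>)"
  using assms by (auto simp: ph_series_def)

lemma onorm_ph_eval_le_ph_norm:
  assumes "ph_series n \<Omega> a b" "z \<in> \<Omega>"
  shows "onorm (ph_eval n a b z :: 'h::chilbert \<Rightarrow> 'h) \<le> ph_norm n \<Omega> a b"
  unfolding ph_norm_def using assms by (intro cSUP_upper) (auto simp: ph_series_def)

lemma ph_eval_origin:
  assumes "b (\<lambda>_. 0) = (\<lambda>x. 0)"
  shows "ph_eval n a b (\<lambda>_. 0) = (a (\<lambda>_. 0) :: 'h::chilbert \<Rightarrow> 'h)"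
proof
  fix x
  have "ph_eval n a b (\<lambda>_. 0) x
      = (\<Sum>\<^sub>\<infinity>\<alpha>\<in>{\<lambda>_. 0}. mpow n (\<lambda>_. 0) \<alpha> *\<^sub>C a \<alpha> x + cnj (mpow n (\<lambda>_. 0) \<alpha>) *\<^sub>C adj (b \<alpha>) x)"
    unfolding ph_eval_def by (rule infsum_cong_neutral) (auto simp: mpow_origin multi_idx_def)
  then show "ph_eval n a b (\<lambda>_. 0) x = a (\<lambda>_. 0) x"
    using assms by (simp add: mpow_def adj_zero scaleC_one)
qed

lemma ph_eval_1:
  "ph_eval 1 a b z x = (\<Sum>\<^sub>\<infinity>k. z 0 ^ k *\<^sub>C a (axis0 k) x + cnj (z 0 ^ k) *\<^sub>C adj (b (axis0 k)) x)"
  unfolding ph_eval_def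
  using infsum_reindex_bij_betw[OF bij_betw_axis0,
      of "\<lambda>\<alpha>. z 0 ^ \<alpha> 0 *\<^sub>C a \<alpha> x + cnj (z 0 ^ \<alpha> 0) *\<^sub>C adj (b \<alpha>) x"]
  by (simp add: axis0_def)

lemma norm_ph_term_le:
  fixes A B :: "'h::chilbert \<Rightarrow> 'h"
  assumes "bop A" "bop B"
  shows "norm (c *\<^sub>C A x + cnj c *\<^sub>C adj B x) \<le> (onorm A + onorm B) * cmod c * norm x"
proof -
  have "norm (c *\<^sub>C A x + cnj c *\<^sub>C adj B x) \<le> cmod c * norm (A x) + cmod c * norm (adj B x)"
    using norm_triangle_ineq[of "c *\<^sub>C A x" "cnj c *\<^sub>C adj B x"] by (simp add: norm_scaleC)
  also have "\<dots> \<le> cmod c * (onorm A * norm x) + cmod c * (onorm B * norm x)"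
    by (intro add_mono mult_left_mono norm_bop_le norm_adj_le assms) auto
  finally show ?thesis
    by (simp add: algebra_simps)
qed

lemma summable_on_ph_terms:
  fixes a b :: "(nat \<Rightarrow> nat) \<Rightarrow> 'h::chilbert \<Rightarrow> 'h"
  assumes "\<And>\<alpha>. \<alpha> \<in> multi_idx n \<Longrightarrow> bop (a \<alpha>) \<and> bop (b \<alpha>)"
    and "(\<lambda>\<alpha>. (onorm (a \<alpha>) + onorm (b \<alpha>)) * norm (mpow n z \<alpha>)) summable_on multi_idx n"
  shows "(\<lambda>\<alpha>. mpow n z \<alpha> *\<^sub>C a \<alpha> x + cnj (mpow n z \<alpha>) *\<^sub>C adj (b \<alpha>) x) summable_on multi_idx n"
proof (rule abs_summable_summable)
  show "(\<lambda>\<alpha>. norm (mpow n z \<alpha> *\<^sub>C a \<alpha> x + cnj (mpow n z \<alpha>) *\<^sub>C adj (b \<alpha>) x)) summable_on multi_idx n"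
    using summable_on_cmult_left[OF assms(2), of "norm x"]
    by (rule Infinite_Sum.abs_summable_on_comparison_test') (use assms(1) norm_ph_term_le in blast)
qed

lemma norm_op_const_coeff_le:
  fixes U :: "('h::chilbert \<Rightarrow> 'h) \<Rightarrow> 'y::cnormed"
  assumes "ph_series n \<Omega> a b" "(\<lambda>_. 0) \<in> \<Omega>"
    and "op_linear U" "op_bounded U" "op_norm U \<le> lam"
  shows "norm (U (a (\<lambda>_. 0))) \<le> lam * ph_norm n \<Omega> a b"
proof -
  have a0: "bop (a (\<lambda>_. 0))"
    using ph_seriesD(1)[OF assms(1)] by (simp add: multi_idx_def)
  have "norm (U (a (\<lambda>_. 0))) \<le> op_norm U * onorm (a (\<lambda>_. 0))"
    by (rule norm_op_le[OF assms(3,4) a0])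
  also have "\<dots> \<le> lam * onorm (a (\<lambda>_. 0))"
    using assms(5) onorm_bop_nonneg[OF a0] by (rule mult_right_mono)
  also have "onorm (a (\<lambda>_. 0)) = onorm (ph_eval n a b (\<lambda>_. 0))"
    using assms(1) by (simp add: ph_eval_origin ph_series_def)
  also have "lam * \<dots> \<le> lam * ph_norm n \<Omega> a b"
    using op_norm_nonneg[OF assms(3,4)] assms(5) onorm_ph_eval_le_ph_norm[OF assms(1,2)]
    by (intro mult_left_mono) auto
  finally show ?thesis .
qed

section \<open>Restriction to the disc and pull-back to the ball\<close>

lemma unit_disc_subset_ball_l1:
  assumes "1 \<le> n"
  shows "unit_disc \<subseteq> ball_l1 n"
proof
  fix \<zeta>
  assume \<zeta>: "\<zeta> \<in> unit_disc"
  then have "(\<Sum>i<n. cmod (\<zeta> i)) = (\<Sum>i<n. if i = 0 then cmod (\<zeta> 0) else 0)"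
    by (intro sum.cong) (auto simp: unit_disc_def)
  also have "\<dots> = cmod (\<zeta> 0)"
    using assms by simp
  finally show "\<zeta> \<in> ball_l1 n"
    using \<zeta> assms by (auto simp: ball_l1_def unit_disc_def)
qed

lemma ph_eval_restrict:
  assumes "1 \<le> n" "\<zeta> \<in> unit_disc"
  shows "ph_eval n a b \<zeta> = (ph_eval 1 a b \<zeta> :: 'h::chilbert \<Rightarrow> 'h)"
proof
  fix x
  have \<zeta>: "\<And>i. 1 \<le> i \<Longrightarrow> \<zeta> i = 0"
    using assms(2) by (simp add: unit_disc_def)
  show "ph_eval n a b \<zeta> x = ph_eval 1 a b \<zeta> x"
    unfolding ph_eval_def
  proof (rule infsum_cong_neutral)
    fix \<alpha>
    assume "\<alpha> \<in> multi_idx n - multi_idx 1"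
    then show "mpow n \<zeta> \<alpha> *\<^sub>C a \<alpha> x + cnj (mpow n \<zeta> \<alpha>) *\<^sub>C adj (b \<alpha>) x = 0"
      using mpow_eq_0_off_axis[OF \<zeta>] by simp
  next
    fix \<alpha>
    assume "\<alpha> \<in> multi_idx n \<inter> multi_idx 1"
    then show "mpow n \<zeta> \<alpha> *\<^sub>C a \<alpha> x + cnj (mpow n \<zeta> \<alpha>) *\<^sub>C adj (b \<alpha>) x
        = mpow 1 \<zeta> \<alpha> *\<^sub>C a \<alpha> x + cnj (mpow 1 \<zeta> \<alpha>) *\<^sub>C adj (b \<alpha>) x"
      using mpow_multi_idx_1[OF assms(1), of \<alpha> \<zeta>] by simp
  qed (use multi_idx_1_subset[OF assms(1)] in auto)
qed

lemma ph_series_restrict: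
  fixes a b :: "(nat \<Rightarrow> nat) \<Rightarrow> 'h::chilbert \<Rightarrow> 'h"
  assumes n: "1 \<le> n" and ser: "ph_series n (ball_l1 n) a b"
  shows "ph_series 1 unit_disc a b" and "ph_norm 1 unit_disc a b \<le> ph_norm n (ball_l1 n) a b"
proof -
  have sub: "unit_disc \<subseteq> ball_l1 n"
    by (rule unit_disc_subset_ball_l1[OF n])
  have bdd: "bdd_above ((\<lambda>z. onorm (ph_eval n a b z :: 'h \<Rightarrow> 'h)) ` ball_l1 n)"
    using ser by (simp add: ph_series_def)
  have "(\<lambda>\<alpha>. (onorm (a \<alpha>) + onorm (b \<alpha>)) * norm (mpow 1 z \<alpha>)) summable_on multi_idx 1"
    if "z \<in> unit_disc" for z
  proof -
    have "(\<lambda>\<alpha>. (onorm (a \<alpha>) + onorm (b \<alpha>)) * norm (mpow n z \<alpha>)) summable_on multi_idx n"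
      using ser that sub by (auto simp: ph_series_def)
    then have "(\<lambda>\<alpha>. (onorm (a \<alpha>) + onorm (b \<alpha>)) * norm (mpow n z \<alpha>)) summable_on multi_idx 1"
      by (rule summable_on_subset_banach) (rule multi_idx_1_subset[OF n])
    moreover have "(\<lambda>\<alpha>. (onorm (a \<alpha>) + onorm (b \<alpha>)) * norm (mpow n z \<alpha>)) summable_on multi_idx 1
        \<longleftrightarrow> (\<lambda>\<alpha>. (onorm (a \<alpha>) + onorm (b \<alpha>)) * norm (mpow 1 z \<alpha>)) summable_on multi_idx 1"
      by (rule summable_on_cong) (simp add: mpow_multi_idx_1[OF n])
    ultimately show ?thesis
      by simp
  qed
  moreover have "(\<lambda>z. onorm (ph_eval 1 a b z :: 'h \<Rightarrow> 'h)) ` unit_disc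
      \<subseteq> (\<lambda>z. onorm (ph_eval n a b z)) ` ball_l1 n" (is "?img1 \<subseteq> ?img")
  proof (rule image_subsetI)
    fix z
    assume "z \<in> unit_disc"
    then show "onorm (ph_eval 1 a b z) \<in> (\<lambda>z. onorm (ph_eval n a b z)) ` ball_l1 n"
      using sub by (intro rev_image_eqI[of z]) (auto simp: ph_eval_restrict[OF n])
  qed
  then have "bdd_above ?img1"
    by (rule bdd_above_mono[OF bdd])
  ultimately show "ph_series 1 unit_disc a b"
    using ser multi_idx_1_subset[OF n] unfolding ph_series_def by blast
  show "ph_norm 1 unit_disc a b \<le> ph_norm n (ball_l1 n) a b"
    unfolding ph_norm_def
    by (rule cSUP_subset_mono[OF _ bdd sub]) (auto simp: ph_eval_restrict[OF n] unit_disc_def)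
qed

text \<open>By the multinomial theorem these are the coefficients of
\<open>w \<mapsto> f (w\<^sub>0 + \<dots> + w\<^sub>n\<^sub>-\<^sub>1)\<close> when \<open>a\<close> and \<open>b\<close> are those of \<open>f\<close>.\<close>

definition sum_pullback :: "nat \<Rightarrow> ((nat \<Rightarrow> nat) \<Rightarrow> 'h::cnormed \<Rightarrow> 'h) \<Rightarrow> (nat \<Rightarrow> nat) \<Rightarrow> 'h \<Rightarrow> 'h" where
  "sum_pullback n a \<alpha> = (\<lambda>x. of_nat (multinomial_coeff n \<alpha>) *\<^sub>C a (axis0 (mdeg n \<alpha>)) x)"

lemma bop_sum_pullback: "bop (a (axis0 (mdeg n \<alpha>))) \<Longrightarrow> bop (sum_pullback n a \<alpha>)"
  unfolding sum_pullback_def by (rule bop_scaleC)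

lemma onorm_sum_pullback:
  "bop (a (axis0 (mdeg n \<alpha>))) \<Longrightarrow>
    onorm (sum_pullback n a \<alpha>) = real (multinomial_coeff n \<alpha>) * onorm (a (axis0 (mdeg n \<alpha>)))"
  using onorm_scaleC_of_real[of "a (axis0 (mdeg n \<alpha>))" "real (multinomial_coeff n \<alpha>)"]
  by (simp add: sum_pullback_def)

lemma norm_op_sum_pullback:
  "op_linear U \<Longrightarrow> bop (a (axis0 (mdeg n \<alpha>))) \<Longrightarrow>
    norm (U (sum_pullback n a \<alpha>)) = real (multinomial_coeff n \<alpha>) * norm (U (a (axis0 (mdeg n \<alpha>))))"
  unfolding sum_pullback_def by (simp add: op_linear_scaleC norm_scaleC)

lemma sum_pullback_origin: "b (\<lambda>_. 0) = (\<lambda>x. 0) \<Longrightarrow> sum_pullback n b (\<lambda>_. 0) = (\<lambda>x. 0)"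
  by (simp add: sum_pullback_def mdeg_def axis0_def fun_eq_iff)

lemma axis0_sum_in_unit_disc:
  assumes "w \<in> ball_l1 n"
  shows "axis0 (\<Sum>i<n. w i) \<in> unit_disc"
proof -
  have "cmod (\<Sum>i<n. w i) \<le> (\<Sum>i<n. cmod (w i))"
    by (rule norm_sum)
  also have "\<dots> < 1"
    using assms by (simp add: ball_l1_def)
  finally show ?thesis
    by (simp add: unit_disc_def axis0_def)
qed

lemma summable_sum_pullback_majorant:
  fixes a b :: "(nat \<Rightarrow> nat) \<Rightarrow> 'h::chilbert \<Rightarrow> 'h"
  assumes ser: "ph_series 1 unit_disc a b" and w: "w \<in> ball_l1 n"
  shows "(\<lambda>\<alpha>. (onorm (sum_pullback n a \<alpha>) + onorm (sum_pullback n b \<alpha>)) * norm (mpow n w \<alpha>))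
    summable_on multi_idx n"
proof -
  define h where "h k = onorm (a (axis0 k)) + onorm (b (axis0 k))" for k
  define t where "t = (\<Sum>i<n. cmod (w i))"
  have bop: "bop (a (axis0 k))" "bop (b (axis0 k))" for k
    using ph_seriesD[OF ser axis0_in_multi_idx] by auto
  have t: "0 \<le> t" "t < 1"
    using w by (simp_all add: ball_l1_def t_def sum_nonneg)
  then have "axis0 (complex_of_real t) \<in> unit_disc"
    by (simp add: unit_disc_def axis0_def)
  then have "(\<lambda>\<alpha>. (onorm (a \<alpha>) + onorm (b \<alpha>)) * norm (mpow 1 (axis0 (complex_of_real t)) \<alpha>))
      summable_on multi_idx 1"
    using ser by (simp add: ph_series_def)
  then have "(\<lambda>k. h k * t ^ k) summable_on UNIV"
    using summable_on_reindex_bij_betw[OF bij_betw_axis0,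
        of "\<lambda>\<alpha>. (onorm (a \<alpha>) + onorm (b \<alpha>)) * norm (mpow 1 (axis0 (complex_of_real t)) \<alpha>)"]
    using t(1) by (simp add: h_def axis0_def norm_power)
  then have "(\<lambda>\<alpha>. h (mdeg n \<alpha>) * (real (multinomial_coeff n \<alpha>) * mpow n (\<lambda>i. cmod (w i)) \<alpha>))
      summable_on multi_idx n"
    by (intro summable_on_multinomial_degreewise) (simp_all add: h_def t_def onorm_bop_nonneg bop)
  moreover have "(onorm (sum_pullback n a \<alpha>) + onorm (sum_pullback n b \<alpha>)) * norm (mpow n w \<alpha>)
      = h (mdeg n \<alpha>) * (real (multinomial_coeff n \<alpha>) * mpow n (\<lambda>i. cmod (w i)) \<alpha>)" for \<alpha>
    by (simp add: onorm_sum_pullback bop h_def norm_mpow algebra_simps)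
  ultimately show ?thesis
    by simp
qed

lemma ph_eval_sum_pullback:
  fixes a b :: "(nat \<Rightarrow> nat) \<Rightarrow> 'h::chilbert \<Rightarrow> 'h"
  assumes ser: "ph_series 1 unit_disc a b" and w: "w \<in> ball_l1 n"
  shows "ph_eval n (sum_pullback n a) (sum_pullback n b) w = ph_eval 1 a b (axis0 (\<Sum>i<n. w i))"
proof
  fix x
  define \<zeta> where "\<zeta> = (\<Sum>i<n. w i)"
  define A where "A k = a (axis0 k) x" for k
  define B where "B k = adj (b (axis0 k)) x" for k
  define m where "m \<alpha> = of_nat (multinomial_coeff n \<alpha>) * mpow n w \<alpha>" for \<alpha>
  define g where "g = (\<lambda>\<alpha>. mpow n w \<alpha> *\<^sub>C sum_pullback n a \<alpha> x
    + cnj (mpow n w \<alpha>) *\<^sub>C adj (sum_pullback n b \<alpha>) x)"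
  have bop: "bop (a (axis0 k))" "bop (b (axis0 k))" for k
    using ph_seriesD[OF ser axis0_in_multi_idx] by auto
  have "g summable_on multi_idx n"
    unfolding g_def
    by (rule summable_on_ph_terms[OF _ summable_sum_pullback_majorant[OF ser w]])
      (simp add: bop_sum_pullback bop)
  then have "((\<lambda>k. \<Sum>\<alpha>\<in>multi_idx_deg n k. g \<alpha>) has_sum infsum g (multi_idx n)) UNIV"
    by (intro has_sum_fiberwise has_sum_infsum finite_multi_idx_deg)
  moreover have "(\<Sum>\<alpha>\<in>multi_idx_deg n k. g \<alpha>) = \<zeta> ^ k *\<^sub>C A k + cnj (\<zeta> ^ k) *\<^sub>C B k" for k
  proof -
    have "(\<Sum>\<alpha>\<in>multi_idx_deg n k. g \<alpha>) = (\<Sum>\<alpha>\<in>multi_idx_deg n k. m \<alpha> *\<^sub>C A k + cnj (m \<alpha>) *\<^sub>C B k)"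
      by (intro sum.cong refl)
        (simp add: g_def m_def A_def B_def sum_pullback_def adj_scaleC bop scaleC_scaleC mult.commute)
    also have "\<dots> = (\<Sum>\<alpha>\<in>multi_idx_deg n k. m \<alpha>) *\<^sub>C A k + cnj (\<Sum>\<alpha>\<in>multi_idx_deg n k. m \<alpha>) *\<^sub>C B k"
      by (simp add: sum.distrib scaleC_sum_left)
    also have "(\<Sum>\<alpha>\<in>multi_idx_deg n k. m \<alpha>) = \<zeta> ^ k"
      unfolding m_def \<zeta>_def by (rule multinomial)
    finally show ?thesis .
  qed
  ultimately have "((\<lambda>k. \<zeta> ^ k *\<^sub>C A k + cnj (\<zeta> ^ k) *\<^sub>C B k) has_sum
      ph_eval n (sum_pullback n a) (sum_pullback n b) w x) UNIV"
    by (simp add: ph_eval_def g_def)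
  then show "ph_eval n (sum_pullback n a) (sum_pullback n b) w x = ph_eval 1 a b (axis0 (\<Sum>i<n. w i)) x"
    unfolding ph_eval_1 by (simp add: infsumI axis0_def A_def B_def \<zeta>_def)
qed

lemma ph_series_sum_pullback:
  fixes a b :: "(nat \<Rightarrow> nat) \<Rightarrow> 'h::chilbert \<Rightarrow> 'h"
  assumes ser: "ph_series 1 unit_disc a b"
  shows "ph_series n (ball_l1 n) (sum_pullback n a) (sum_pullback n b)"
    and "ph_norm n (ball_l1 n) (sum_pullback n a) (sum_pullback n b) \<le> ph_norm 1 unit_disc a b"
proof -
  have eval: "onorm (ph_eval n (sum_pullback n a) (sum_pullback n b) w) \<le> ph_norm 1 unit_disc a b"
    if "w \<in> ball_l1 n" for w
    using onorm_ph_eval_le_ph_norm[OF ser axis0_sum_in_unit_disc[OF that]]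
    by (simp add: ph_eval_sum_pullback[OF ser that])
  show "ph_series n (ball_l1 n) (sum_pullback n a) (sum_pullback n b)"
    unfolding ph_series_def
  proof (intro conjI ballI)
    fix \<alpha>
    show "bop (sum_pullback n a \<alpha>)" "bop (sum_pullback n b \<alpha>)"
      using ph_seriesD[OF ser axis0_in_multi_idx] by (simp_all add: bop_sum_pullback)
  next
    show "sum_pullback n b (\<lambda>_. 0) = (\<lambda>x. 0)"
      using ser by (simp add: sum_pullback_origin ph_series_def)
  next
    show "(\<lambda>\<alpha>. (onorm (sum_pullback n a \<alpha>) + onorm (sum_pullback n b \<alpha>)) * norm (mpow n w \<alpha>))
      summable_on multi_idx n"
      if "w \<in> ball_l1 n" for w
      by (rule summable_sum_pullback_majorant[OF ser that])
  next
    show "bdd_above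
      ((\<lambda>w. onorm (ph_eval n (sum_pullback n a) (sum_pullback n b) w :: 'h \<Rightarrow> 'h)) ` ball_l1 n)"
      using eval by (intro bdd_aboveI) auto
  qed
  show "ph_norm n (ball_l1 n) (sum_pullback n a) (sum_pullback n b) \<le> ph_norm 1 unit_disc a b"
    unfolding ph_norm_def[of n]
  proof (rule cSUP_least)
    show "ball_l1 n \<noteq> {}"
      by (auto simp: ball_l1_def)
  qed (rule eval)
qed

section \<open>Admissible radii\<close>

definition R_admissible ::
    "real \<Rightarrow> nat \<Rightarrow> (nat \<Rightarrow> complex) set \<Rightarrow> (('h::chilbert \<Rightarrow> 'h) \<Rightarrow> 'y::cnormed) \<Rightarrow> real \<Rightarrow> bool" where
  "R_admissible lam n \<Omega> U r \<longleftrightarrow> r \<ge> 0 \<and>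
     (\<forall>a b. ph_series n \<Omega> a b \<longrightarrow>
        (\<forall>z\<in>scale_set r \<Omega>.
           nn_sum_le (\<lambda>\<alpha>. (norm (U (a \<alpha>)) + norm (U (b \<alpha>))) * norm (mpow n z \<alpha>))
             (multi_idx n) (lam * ph_norm n \<Omega> a b)))"

definition AP_admissible ::
    "real \<Rightarrow> nat \<Rightarrow> (nat \<Rightarrow> complex) set \<Rightarrow> (('h::chilbert \<Rightarrow> 'h) \<Rightarrow> 'y::cnormed) \<Rightarrow> (nat \<Rightarrow> real) \<Rightarrow> bool"
  where
  "AP_admissible lam n \<Omega> U r \<longleftrightarrow> (\<forall>i<n. r i \<ge> 0) \<and>
     (\<forall>a b. ph_series n \<Omega> a b \<longrightarrow>
        nn_sum_le (\<lambda>\<alpha>. (norm (U (a \<alpha>)) + norm (U (b \<alpha>))) * mpow n r \<alpha>)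
          (multi_idx n) (lam * ph_norm n \<Omega> a b))"

lemma R_lambda_eq_Sup: "R_lambda lam n \<Omega> U = Sup {r. R_admissible lam n \<Omega> U r}"
  unfolding R_lambda_def R_admissible_def ..

lemma AP_lambda_eq_Sup:
  "AP_lambda lam n \<Omega> U = Sup {(\<Sum>i<n. r i) / real n | r. AP_admissible lam n \<Omega> U r}"
  unfolding AP_lambda_def AP_admissible_def ..

lemma sum_axis0: "1 \<le> n \<Longrightarrow> (\<Sum>i<n. axis0 c i) = c"
  by (simp add: axis0_def)

lemma axis0_in_scale_set:
  assumes "0 \<le> t" "t < s"
  shows "axis0 (complex_of_real t) \<in> scale_set s unit_disc"
proof -
  have "cmod (complex_of_real (t / s)) < 1"
    using assms by (simp only: norm_of_real) simp
  then have "axis0 (complex_of_real (t / s)) \<in> unit_disc"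
    by (simp add: axis0_def unit_disc_def del: of_real_divide)
  moreover have "axis0 (complex_of_real t) = (\<lambda>i. complex_of_real s * axis0 (complex_of_real (t / s)) i)"
    using assms by (auto simp: axis0_def)
  ultimately show ?thesis
    unfolding scale_set_def by blast
qed

lemma scale_set_unit_disc_bound:
  assumes "z \<in> scale_set s unit_disc" "0 \<le> s"
  shows "cmod (z 0) \<le> s"
proof -
  obtain v where "v \<in> unit_disc" "z = (\<lambda>i. complex_of_real s * v i)"
    using assms(1) unfolding scale_set_def by blast
  then show ?thesis
    using assms(2) mult_left_le[of "cmod (v 0)" s] by (simp add: norm_mult unit_disc_def)
qed

lemma AP_admissible_origin:
  fixes U :: "('h::chilbert \<Rightarrow> 'h) \<Rightarrow> 'y::cnormed"
  assumes "(\<lambda>_. 0) \<in> \<Omega>" "op_linear U" "op_bounded U" "op_norm U \<le> lam"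
  shows "AP_admissible lam n \<Omega> U (\<lambda>_. 0)"
  unfolding AP_admissible_def
proof (intro conjI allI impI)
  fix a b :: "(nat \<Rightarrow> nat) \<Rightarrow> 'h \<Rightarrow> 'h"
  assume ser: "ph_series n \<Omega> a b"
  have "nn_sum_le (\<lambda>\<alpha>. (norm (U (a \<alpha>)) + norm (U (b \<alpha>))) * mpow n (\<lambda>_. 0) \<alpha>) {\<lambda>_. 0}
      (lam * ph_norm n \<Omega> a b)"
    using norm_op_const_coeff_le[OF ser assms] ser op_linear_zero[OF assms(2)]
    by (simp add: nn_sum_le_def mpow_def ph_series_def)
  then show "nn_sum_le (\<lambda>\<alpha>. (norm (U (a \<alpha>)) + norm (U (b \<alpha>))) * mpow n (\<lambda>_. 0) \<alpha>) (multi_idx n)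
      (lam * ph_norm n \<Omega> a b)"
    by (rule nn_sum_le_superset[rotated 2]) (auto simp: multi_idx_def mpow_origin)
qed simp

definition linear_coeffs :: "('h \<Rightarrow> 'h::cnormed) \<Rightarrow> (nat \<Rightarrow> nat) \<Rightarrow> 'h \<Rightarrow> 'h" where
  "linear_coeffs T \<alpha> = (if \<alpha> = axis0 1 then T else (\<lambda>x. 0))"

lemma linear_coeffs_axis0: "linear_coeffs T (axis0 k) = (if k = 1 then T else (\<lambda>x. 0))"
  by (auto simp: linear_coeffs_def axis0_def fun_eq_iff)

lemma ph_eval_linear_coeffs:
  "ph_eval 1 (linear_coeffs T) (\<lambda>_ x. 0) z = (\<lambda>x. z 0 *\<^sub>C T x :: 'h::chilbert)"
proof
  fix x
  have "ph_eval 1 (linear_coeffs T) (\<lambda>_ x. 0) z x = (\<Sum>\<^sub>\<infinity>k\<in>{1}. z 0 ^ k *\<^sub>C linear_coeffs T (axis0 k) x)"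
    unfolding ph_eval_1 adj_zero by (rule infsum_cong_neutral) (auto simp: linear_coeffs_axis0)
  then show "ph_eval 1 (linear_coeffs T) (\<lambda>_ x. 0) z x = z 0 *\<^sub>C T x"
    by (simp add: linear_coeffs_axis0)
qed

lemma onorm_ph_eval_linear_coeffs_le:
  fixes T :: "'h::chilbert \<Rightarrow> 'h"
  assumes T: "bop T" and z: "z \<in> unit_disc"
  shows "onorm (ph_eval 1 (linear_coeffs T) (\<lambda>_ x. 0) z) \<le> onorm T"
proof -
  have "onorm (\<lambda>x. z 0 *\<^sub>C T x) \<le> cmod (z 0) * onorm T"
  proof (rule onorm_bound)
    show "0 \<le> cmod (z 0) * onorm T"
      using onorm_bop_nonneg[OF T] by simp
    show "norm (z 0 *\<^sub>C T x) \<le> cmod (z 0) * onorm T * norm x" for x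
      using norm_bop_le[OF T, of x] by (simp add: norm_scaleC mult.assoc mult_left_mono)
  qed
  also have "\<dots> \<le> onorm T"
    using z onorm_bop_nonneg[OF T] by (intro mult_left_le_one_le) (auto simp: unit_disc_def)
  finally show ?thesis
    unfolding ph_eval_linear_coeffs .
qed

lemma ph_series_linear_coeffs:
  fixes T :: "'h::chilbert \<Rightarrow> 'h"
  assumes T: "bop T"
  shows "ph_series 1 unit_disc (linear_coeffs T) (\<lambda>_ x. 0)"
  unfolding ph_series_def
proof (intro conjI ballI)
  show "bop (linear_coeffs T \<alpha>)" "bop (\<lambda>x::'h. 0::'h)" for \<alpha>
    by (simp_all add: linear_coeffs_def T bop_zero)
  show "(\<lambda>\<alpha>. (onorm (linear_coeffs T \<alpha>) + onorm (\<lambda>x::'h. 0::'h)) * norm (mpow 1 z \<alpha>))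
      summable_on multi_idx 1" for z
  proof -
    have "(\<lambda>\<alpha>. (onorm (linear_coeffs T \<alpha>) + onorm (\<lambda>x::'h. 0::'h)) * norm (mpow 1 z \<alpha>))
        summable_on {axis0 1}"
      by simp
    then show ?thesis
      by (rule summable_on_cong_neutral[THEN iffD1, rotated -1])
        (auto simp: linear_coeffs_def onorm_zero axis0_in_multi_idx)
  qed
  show "bdd_above ((\<lambda>z. onorm (ph_eval 1 (linear_coeffs T) (\<lambda>_ x. 0) z)) ` unit_disc)"
    using onorm_ph_eval_linear_coeffs_le[OF T] by (intro bdd_aboveI) auto
qed simp

lemma ph_norm_linear_coeffs_le:
  fixes T :: "'h::chilbert \<Rightarrow> 'h"
  assumes "bop T"
  shows "ph_norm 1 unit_disc (linear_coeffs T) (\<lambda>_ x. 0) \<le> onorm T"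
  unfolding ph_norm_def
proof (rule cSUP_least)
  show "unit_disc \<noteq> {}"
    using axis0_sum_in_unit_disc[of "\<lambda>_. 0" 0] by (auto simp: ball_l1_def)
qed (rule onorm_ph_eval_linear_coeffs_le[OF assms])

lemma R_admissible_disc_le:
  fixes U :: "('h::chilbert \<Rightarrow> 'h) \<Rightarrow> 'y::cnormed"
  assumes U: "op_linear U" and T: "bop T" "U T \<noteq> 0" and lam: "0 \<le> lam"
    and R: "R_admissible lam 1 unit_disc U s"
  shows "s \<le> lam * onorm T / norm (U T)"
proof (rule dense_le)
  fix t
  assume "t < s"
  show "t \<le> lam * onorm T / norm (U T)"
  proof (cases "0 \<le> t")
    case True
    let ?g = "\<lambda>\<alpha>. (norm (U (linear_coeffs T \<alpha>)) + norm (U (\<lambda>x::'h. 0::'h)))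
      * norm (mpow 1 (axis0 (complex_of_real t)) \<alpha>)"
    have "nn_sum_le ?g (multi_idx 1) (lam * ph_norm 1 unit_disc (linear_coeffs T) (\<lambda>_ x. 0))"
      using R ph_series_linear_coeffs[OF T(1)] axis0_in_scale_set[OF True \<open>t < s\<close>]
      unfolding R_admissible_def by blast
    then have "?g (axis0 1) \<le> lam * ph_norm 1 unit_disc (linear_coeffs T) (\<lambda>_ x. 0)"
      by (rule nn_sum_le_imp_le) (auto simp: axis0_in_multi_idx)
    also have "\<dots> \<le> lam * onorm T"
      using ph_norm_linear_coeffs_le[OF T(1)] lam by (rule mult_left_mono)
    finally have "norm (U T) * t \<le> lam * onorm T"
      using True by (simp add: linear_coeffs_def axis0_def op_linear_zero[OF U])
    then show ?thesis
      using T(2) by (simp add: pos_le_divide_eq mult.commute)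
  next
    case False
    have "0 \<le> lam * onorm T / norm (U T)"
      using lam onorm_bop_nonneg[OF T(1)] by simp
    then show ?thesis
      using False by linarith
  qed
qed

lemma AP_admissible_imp_R_admissible_sum:
  fixes U :: "('h::chilbert \<Rightarrow> 'h) \<Rightarrow> 'y::cnormed"
  assumes U: "op_linear U" and lam: "0 \<le> lam" and r: "AP_admissible lam n (ball_l1 n) U r"
  shows "R_admissible lam 1 unit_disc U (\<Sum>i<n. r i)"
  unfolding R_admissible_def
proof (intro conjI allI impI ballI)
  show s: "0 \<le> (\<Sum>i<n. r i)"
    using r by (auto simp: AP_admissible_def intro: sum_nonneg)
  fix a b :: "(nat \<Rightarrow> nat) \<Rightarrow> 'h \<Rightarrow> 'h" and z
  assume ser: "ph_series 1 unit_disc a b" and z: "z \<in> scale_set (\<Sum>i<n. r i) unit_disc"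
  define C where "C k = norm (U (a (axis0 k))) + norm (U (b (axis0 k)))" for k
  have bop: "bop (a (axis0 k))" "bop (b (axis0 k))" for k
    using ph_seriesD[OF ser axis0_in_multi_idx] by auto
  have "nn_sum_le (\<lambda>\<alpha>. (norm (U (sum_pullback n a \<alpha>)) + norm (U (sum_pullback n b \<alpha>))) * mpow n r \<alpha>)
      (multi_idx n) (lam * ph_norm n (ball_l1 n) (sum_pullback n a) (sum_pullback n b))"
    using r ph_series_sum_pullback(1)[OF ser] by (simp add: AP_admissible_def)
  moreover have "(norm (U (sum_pullback n a \<alpha>)) + norm (U (sum_pullback n b \<alpha>))) * mpow n r \<alpha>
      = C (mdeg n \<alpha>) * (of_nat (multinomial_coeff n \<alpha>) * mpow n r \<alpha>)" for \<alpha>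
    by (simp add: norm_op_sum_pullback[OF U] bop C_def algebra_simps)
  ultimately have "nn_sum_le (\<lambda>\<alpha>. C (mdeg n \<alpha>) * (of_nat (multinomial_coeff n \<alpha>) * mpow n r \<alpha>))
      (multi_idx n) (lam * ph_norm n (ball_l1 n) (sum_pullback n a) (sum_pullback n b))"
    by simp
  then have "((\<lambda>k. C k * (\<Sum>i<n. r i) ^ k) has_sum
      (\<Sum>\<^sub>\<infinity>\<alpha>\<in>multi_idx n. C (mdeg n \<alpha>) * (of_nat (multinomial_coeff n \<alpha>) * mpow n r \<alpha>))) UNIV"
    and "(\<Sum>\<^sub>\<infinity>\<alpha>\<in>multi_idx n. C (mdeg n \<alpha>) * (of_nat (multinomial_coeff n \<alpha>) * mpow n r \<alpha>))
      \<le> lam * ph_norm 1 unit_disc a b"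
    using ph_series_sum_pullback(2)[OF ser, of n] mult_left_mono[OF _ lam]
    by (auto simp: nn_sum_le_def intro: has_sum_multinomial_degreewise order_trans)
  then have "nn_sum_le (\<lambda>k. C k * (\<Sum>i<n. r i) ^ k) UNIV (lam * ph_norm 1 unit_disc a b)"
    by (auto simp: nn_sum_le_def infsumI has_sum_imp_summable)
  then have "nn_sum_le (\<lambda>k. C k * cmod (z 0) ^ k) UNIV (lam * ph_norm 1 unit_disc a b)"
    by (rule nn_sum_le_mono)
      (use scale_set_unit_disc_bound[OF z s] in \<open>auto simp: C_def intro!: mult_left_mono power_mono\<close>)
  then show "nn_sum_le (\<lambda>\<alpha>. (norm (U (a \<alpha>)) + norm (U (b \<alpha>))) * norm (mpow 1 z \<alpha>))
      (multi_idx 1) (lam * ph_norm 1 unit_disc a b)"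
    unfolding nn_sum_le_multi_idx_1 by (simp add: C_def axis0_def norm_power)
qed

lemma R_admissible_imp_AP_admissible_axis0:
  fixes U :: "('h::chilbert \<Rightarrow> 'h) \<Rightarrow> 'y::cnormed"
  assumes n: "1 \<le> n" and lam: "0 \<le> lam" and R: "R_admissible lam 1 unit_disc U s"
    and t: "0 \<le> t" "t < s"
  shows "AP_admissible lam n (ball_l1 n) U (axis0 t)"
  unfolding AP_admissible_def
proof (intro conjI allI impI)
  show "0 \<le> axis0 t i" for i
    using t by (simp add: axis0_def)
  fix a b :: "(nat \<Rightarrow> nat) \<Rightarrow> 'h \<Rightarrow> 'h"
  assume ser: "ph_series n (ball_l1 n) a b"
  let ?C = "\<lambda>\<alpha>. norm (U (a \<alpha>)) + norm (U (b \<alpha>))"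
  have "nn_sum_le (\<lambda>\<alpha>. ?C \<alpha> * norm (mpow 1 (axis0 (complex_of_real t)) \<alpha>)) (multi_idx 1)
      (lam * ph_norm 1 unit_disc a b)"
    using R ph_series_restrict(1)[OF n ser] axis0_in_scale_set[OF t] unfolding R_admissible_def by blast
  then have "nn_sum_le (\<lambda>\<alpha>. ?C \<alpha> * mpow n (axis0 t) \<alpha>) (multi_idx 1) (lam * ph_norm n (ball_l1 n) a b)"
    by (rule nn_sum_le_mono)
      (use ph_series_restrict(2)[OF n ser] lam t
        in \<open>auto simp: mpow_multi_idx_1[OF n] axis0_def norm_power intro: mult_left_mono\<close>)
  then show "nn_sum_le (\<lambda>\<alpha>. ?C \<alpha> * mpow n (axis0 t) \<alpha>) (multi_idx n) (lam * ph_norm n (ball_l1 n) a b)"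
    by (rule nn_sum_le_superset[rotated 2])
      (use multi_idx_1_subset[OF n] in \<open>auto simp: mpow_eq_0_off_axis axis0_def\<close>)
qed

lemma cSup_image_divide_eq:
  fixes g :: "'a \<Rightarrow> real" and c :: real
  assumes c: "0 < c" and "P r0" "g r0 = 0" and "bdd_above {s. Q s}"
    and P_Q: "\<And>r. P r \<Longrightarrow> Q (g r)"
    and Q_P: "\<And>s t. Q s \<Longrightarrow> 0 \<le> t \<Longrightarrow> t < s \<Longrightarrow> \<exists>r. P r \<and> g r = t"
  shows "Sup {g r / c | r. P r} = Sup {s. Q s} / c"
proof (rule antisym)
  have le_Sup_Q: "g r \<le> Sup {s. Q s}" if "P r" for r
    using P_Q[OF that] \<open>bdd_above {s. Q s}\<close> by (intro cSup_upper) auto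
  then show "Sup {g r / c | r. P r} \<le> Sup {s. Q s} / c"
    using \<open>P r0\<close> c by (intro cSup_least) (auto intro: divide_right_mono)
  have bdd: "bdd_above {g r / c | r. P r}"
    using le_Sup_Q c by (intro bdd_aboveI[of _ "Sup {s. Q s} / c"]) (auto intro: divide_right_mono)
  have le_Sup_P: "g r / c \<le> Sup {g r / c | r. P r}" if "P r" for r
    using that bdd by (intro cSup_upper) auto
  have "s \<le> c * Sup {g r / c | r. P r}" if "Q s" for s
  proof (rule dense_le)
    fix t
    assume "t < s"
    show "t \<le> c * Sup {g r / c | r. P r}"
    proof (cases "0 \<le> t")
      case True
      then obtain r where "P r" "g r = t"
        using Q_P[OF \<open>Q s\<close> _ \<open>t < s\<close>] by blast
      then show ?thesis
        using le_Sup_P[of r] c by (simp add: pos_divide_le_eq mult.commute)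
    next
      case False
      then show ?thesis
        using le_Sup_P[OF \<open>P r0\<close>] c \<open>g r0 = 0\<close> by (simp add: order_trans[OF _ mult_nonneg_nonneg])
    qed
  qed
  then have "Sup {s. Q s} \<le> c * Sup {g r / c | r. P r}"
    using P_Q \<open>P r0\<close> by (intro cSup_least) auto
  then show "Sup {s. Q s} / c \<le> Sup {g r / c | r. P r}"
    using c by (simp add: pos_divide_le_eq mult.commute)
qed

theorem mainTheorem15:
  fixes U :: "('h::chilbert \<Rightarrow> 'h) \<Rightarrow> 'y::{cnormed,banach}"
    and lam :: real and n :: nat
  assumes "op_linear U" and "op_bounded U"
    and "\<exists>T. bop T \<and> U T \<noteq> 0"
    and "op_norm U < lam"
    and "n \<ge> 1"
  shows "AP_lambda lam n (ball_l1 n) U = R_lambda lam 1 unit_disc U / real n"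
proof -
  have lam: "0 \<le> lam"
    using op_norm_nonneg[OF assms(1,2)] assms(4) by linarith
  obtain T where T: "bop T" "U T \<noteq> 0"
    using assms(3) by blast
  show ?thesis
    unfolding AP_lambda_eq_Sup R_lambda_eq_Sup
  proof (rule cSup_image_divide_eq)
    show "AP_admissible lam n (ball_l1 n) U (\<lambda>_. 0)"
      using assms(1,2,4) by (intro AP_admissible_origin) (auto simp: ball_l1_def)
    show "bdd_above {s. R_admissible lam 1 unit_disc U s}"
      using R_admissible_disc_le[OF assms(1) T lam] by (intro bdd_aboveI) auto
    show "R_admissible lam 1 unit_disc U (\<Sum>i<n. r i)" if "AP_admissible lam n (ball_l1 n) U r" for r
      using AP_admissible_imp_R_admissible_sum[OF assms(1) lam that] .
    show "\<exists>r. AP_admissible lam n (ball_l1 n) U r \<and> (\<Sum>i<n. r i) = t"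
      if "R_admissible lam 1 unit_disc U s" "0 \<le> t" "t < s" for s t
      using R_admissible_imp_AP_admissible_axis0[OF assms(5) lam that] sum_axis0[OF assms(5)] by blast
  qed (use assms(5) in auto)
qed

end
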